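(* Let $(\mathcal{V},\mathcal{B})$ be a Steiner triple system (a $(2,3,V)$-Steiner system) in which every point lies in exactly $R$ blocks, with embedding operators $\{\mathbf{E}_v\}_{v\in\mathcal{V}}$. Let $\{\varphi_s\}_{s=1}^{R+1}$ be a unimodular simplex in $\mathbb{C}^R$ with Naimark complement $\{a_s\}_{s=1}^{R+1}\subset\mathbb{C}$, and let $\{\psi_t\}_{t=1}^{V+1}$ be a unimodular simplex in $\mathbb{C}^\mathcal{V}$ with Naimark complement $\{b_t\}_{t=1}^{V+1}\subset\mathbb{C}$. Then the ensemble \[ \Big\{\mathbf{E}_v\varphi_s\oplus\sqrt{2}\,a_s\delta_v\oplus 0\Big\}_{s\in[R+1],\ v\in\mathcal{V}} \cup\Big\{0_\mathcal{B}\oplus\sqrt{\tfrac{1}{2}}\,\psi_t\oplus\sqrt{\tfrac{3}{2}}\,b_t\Big\}_{t=1}^{V+1} \] forms an equiangular tight frame in $\mathbb{C}^\mathcal{B}\oplus\mathbb{C}^\mathcal{V}\oplus\mathbb{C}$.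
   Context: A $(2,K,V)$-Steiner system is a set $\mathcal{V}$ of $V$ points with a collection $\mathcal{B}$ of $K$-element subsets (blocks) such that every 2-element subset of $\mathcal{V}$ lies in exactly one block; each point then lies in the same number $R$ of blocks. For a finite set $\mathcal{S}$, $\{\delta_s\}_{s\in\mathcal{S}}$ is the standard orthonormal basis of $\mathbb{C}^\mathcal{S}$. For $v\in\mathcal{V}$, an embedding operator $\mathbf{E}_v\colon\mathbb{C}^R\to\mathbb{C}^\mathcal{B}$ is a linear map sending $\{\delta_r\}_{r=1}^R$ bijectively onto $\{\delta_b: b\in\mathcal{B}, v\in b\}$. A complex Hadamard matrix of size $n$ is an $n\times n$ matrix $\mathbf{H}$ with entries of modulus 1 and $\mathbf{H}\mathbf{H}^*=n\mathbf{I}$. A unimodular simplex in $\mathbb{C}^{n-1}$ is the sequence of $n$ columns of the matrix obtained by deleting one row of an $n\times n$ complex Hadamard matrix; the entries of the deleted row, indexed by column, form its Naimark complement. An equiangular tight frame (ETF) in a finite-dimensional Hilbert space $\mathcal{H}$ is a finite sequence $\{\phi_i\}_{i=1}^N$ of nonzero vectors of equal norm such that $|\langle\phi_i,\phi_j\rangle|$ is the same for all $i\neq j$ and the frame operator $x\mapsto\sum_i\langle x,\phi_i\rangle\phi_i$ is a scalar multiple of the identity on $\mathcal{H}$. *)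

theory Defs
  imports Complex_Main
begin

text \<open>Vectors in \<open>\<complex>^I\<close> (I a finite index set) are represented as functions
  \<open>'i \<Rightarrow> complex\<close>; only their values on I matter.\<close>

definition cinner :: "'i set \<Rightarrow> ('i \<Rightarrow> complex) \<Rightarrow> ('i \<Rightarrow> complex) \<Rightarrow> complex" where
  "cinner I x y = (\<Sum>i\<in>I. x i * cnj (y i))"

definition is_ETF :: "'i set \<Rightarrow> 'j set \<Rightarrow> ('j \<Rightarrow> 'i \<Rightarrow> complex) \<Rightarrow> bool" where
  "is_ETF I J \<phi> \<longleftrightarrow>
     finite I \<and> finite J \<and>
     (\<forall>j\<in>J. \<exists>i\<in>I. \<phi> j i \<noteq> 0) \<and>
     (\<forall>j\<in>J. \<forall>k\<in>J. cinner I (\<phi> j) (\<phi> j) = cinner I (\<phi> k) (\<phi> k)) \<and>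
     (\<forall>j1\<in>J. \<forall>j2\<in>J. \<forall>k1\<in>J. \<forall>k2\<in>J. j1 \<noteq> j2 \<longrightarrow> k1 \<noteq> k2 \<longrightarrow>
        cmod (cinner I (\<phi> j1) (\<phi> j2)) = cmod (cinner I (\<phi> k1) (\<phi> k2))) \<and>
     (\<exists>c::complex. \<forall>x::'i \<Rightarrow> complex. \<forall>i\<in>I.
        (\<Sum>j\<in>J. cinner I x (\<phi> j) * \<phi> j i) = c * x i)"

definition is_complex_hadamard :: "'r set \<Rightarrow> 'c set \<Rightarrow> ('r \<Rightarrow> 'c \<Rightarrow> complex) \<Rightarrow> bool" where
  "is_complex_hadamard Rows Cols H \<longleftrightarrow>
     finite Rows \<and> finite Cols \<and> card Rows = card Cols \<and>
     (\<forall>r\<in>Rows. \<forall>c\<in>Cols. cmod (H r c) = 1) \<and>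
     (\<forall>r1\<in>Rows. \<forall>r2\<in>Rows.
        (\<Sum>c\<in>Cols. H r1 c * cnj (H r2 c)) = (if r1 = r2 then of_nat (card Cols) else 0))"

text \<open>\<open>{\<phi> c}\<^sub>c\<^sub>\<in>\<^sub>C\<^sub>o\<^sub>l\<^sub>s\<close> is a unimodular simplex in \<open>\<complex>^D\<close> with Naimark complement
  \<open>{a c}\<close>: the matrix with rows indexed by \<open>None\<close> (the deleted row, entries \<open>a c\<close>)
  and \<open>Some d\<close>, \<open>d \<in> D\<close> (entries \<open>\<phi> c d\<close>) is a complex Hadamard matrix.\<close>
definition unimodular_simplex ::
    "'d set \<Rightarrow> 'c set \<Rightarrow> ('c \<Rightarrow> 'd \<Rightarrow> complex) \<Rightarrow> ('c \<Rightarrow> complex) \<Rightarrow> bool" where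
  "unimodular_simplex D Cols \<phi> a \<longleftrightarrow>
     is_complex_hadamard (insert None (Some ` D)) Cols
       (\<lambda>r c. case r of None \<Rightarrow> a c | Some d \<Rightarrow> \<phi> c d)"

definition steiner_triple_system :: "'v set \<Rightarrow> 'v set set \<Rightarrow> bool" where
  "steiner_triple_system Vs Bs \<longleftrightarrow>
     finite Vs \<and> (\<forall>b\<in>Bs. b \<subseteq> Vs \<and> card b = 3) \<and>
     (\<forall>x\<in>Vs. \<forall>y\<in>Vs. x \<noteq> y \<longrightarrow> (\<exists>!b. b \<in> Bs \<and> {x, y} \<subseteq> b))"

text \<open>Embedding operator \<open>E_v : \<complex>^R \<rightarrow> \<complex>^B\<close> determined by the bijection
  \<open>e : {1..R} \<rightarrow> {b \<in> B. v \<in> b}\<close>: it maps \<open>\<delta>_r\<close> to \<open>\<delta>_(e r)\<close>.\<close>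
definition embed_op :: "nat \<Rightarrow> (nat \<Rightarrow> 'b) \<Rightarrow> (nat \<Rightarrow> complex) \<Rightarrow> 'b \<Rightarrow> complex" where
  "embed_op R e x = (\<lambda>b. \<Sum>r\<in>{1..R}. x r * (if e r = b then 1 else 0))"

end

theory Submission
  imports Defs "Jordan_Normal_Form.Determinant"
begin

(*
  Every Gram entry of the ensemble reduces to orthogonality relations of the two Hadamard
  matrices. For v \<noteq> w the vectors indexed by (s, v) and (s', w) overlap only in the unique
  block through v and w, so their inner product is a product of two unimodular entries; for
  v = w the embedding E_v is an isometry and column orthogonality of the first Hadamard matrix
  leaves a_s cnj(a_s'). Since V = 2R + 1, all squared norms equal R + 2 = (V + 3)/2.
  Tightness is checked on the rows of the synthesis matrix, indexed by blocks, points and the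
  extra coordinate: they are mutually orthogonal with common squared norm 3(R + 1) = 3(V + 1)/2.
*)

lemma complex_hadamard_columns_orthogonal:
  assumes H: "is_complex_hadamard Rows Cols H" and c1: "c1 \<in> Cols" and c2: "c2 \<in> Cols"
  shows "(\<Sum>r\<in>Rows. H r c1 * cnj (H r c2)) = (if c1 = c2 then of_nat (card Rows) else 0)"
proof -
  define n where "n = card Rows"
  have fin: "finite Rows" "finite Cols" and card_Cols: "card Cols = n"
    and rows: "\<And>r1 r2. r1 \<in> Rows \<Longrightarrow> r2 \<in> Rows \<Longrightarrow>
        (\<Sum>c\<in>Cols. H r1 c * cnj (H r2 c)) = (if r1 = r2 then of_nat n else 0)"
    using H unfolding is_complex_hadamard_def n_def by auto
  have "n \<noteq> 0" using card_Cols c1 fin by (auto simp: card_gt_0_iff)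
  obtain fr where fr: "bij_betw fr {0..<n} Rows"
    using ex_bij_betw_nat_finite[OF fin(1)] n_def by blast
  obtain fc where fc: "bij_betw fc {0..<n} Cols"
    using ex_bij_betw_nat_finite[OF fin(2)] card_Cols by blast
  define A where "A = mat n n (\<lambda>(i,j). H (fr i) (fc j))"
  define B where "B = mat n n (\<lambda>(i,j). cnj (H (fr j) (fc i)) / of_nat n)"
  have carrier: "A \<in> carrier_mat n n" "B \<in> carrier_mat n n" unfolding A_def B_def by auto
  have "A * B = 1\<^sub>m n"
  proof (rule eq_matI)
    fix i j assume "i < dim_row (1\<^sub>m n)" "j < dim_col (1\<^sub>m n)"
    then have ij: "i < n" "j < n" by auto
    have "(A * B) $$ (i,j) = (\<Sum>k\<in>{0..<n}. H (fr i) (fc k) * (cnj (H (fr j) (fc k)) / of_nat n))"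
      using ij unfolding A_def B_def by (simp add: scalar_prod_def)
    also have "\<dots> = (\<Sum>c\<in>Cols. H (fr i) c * cnj (H (fr j) c)) / of_nat n"
      unfolding sum.reindex_bij_betw[OF fc, of "\<lambda>c. H (fr i) c * cnj (H (fr j) c)", symmetric]
      by (simp add: sum_divide_distrib)
    finally have "(A * B) $$ (i,j) = \<dots>" .
    moreover have "fr i \<in> Rows" "fr j \<in> Rows" "(fr i = fr j) = (i = j)"
      using fr ij by (auto simp: bij_betw_def inj_on_def)
    ultimately show "(A * B) $$ (i,j) = 1\<^sub>m n $$ (i,j)" using rows \<open>n \<noteq> 0\<close> ij by auto
  qed (auto simp: A_def B_def)
  \<comment> \<open>a one-sided inverse of a square matrix is two-sided, which turns row into column orthogonality\<close>
  then have BA: "B * A = 1\<^sub>m n" using carrier by (metis mat_mult_left_right_inverse)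
  obtain i j where ij: "i < n" "j < n" "fc i = c2" "fc j = c1"
    using c1 c2 bij_betw_imp_surj_on[OF fc] by (metis atLeastLessThan_iff imageE)
  have "(B * A) $$ (i,j) = (\<Sum>k\<in>{0..<n}. cnj (H (fr k) (fc i)) / of_nat n * H (fr k) (fc j))"
    using ij unfolding A_def B_def by (simp add: scalar_prod_def)
  also have "\<dots> = (\<Sum>r\<in>Rows. H r c1 * cnj (H r c2)) / of_nat n"
    unfolding sum.reindex_bij_betw[OF fr, of "\<lambda>r. H r c1 * cnj (H r c2)", symmetric]
    using ij by (simp add: sum_divide_distrib mult.commute)
  finally have "(B * A) $$ (i,j) = \<dots>" .
  moreover have "(i = j) = (c1 = c2)" using fc ij by (auto simp: bij_betw_def inj_on_def)
  ultimately show ?thesis using BA ij \<open>n \<noteq> 0\<close> by (auto simp: n_def split: if_splits)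
qed

lemma is_complex_hadamardD:
  assumes "is_complex_hadamard Rows Cols H"
  shows "finite Rows" and "card Rows = card Cols"
    and "r \<in> Rows \<Longrightarrow> c \<in> Cols \<Longrightarrow> cmod (H r c) = 1"
    and "r1 \<in> Rows \<Longrightarrow> r2 \<in> Rows \<Longrightarrow>
      (\<Sum>c\<in>Cols. H r1 c * cnj (H r2 c)) = (if r1 = r2 then of_nat (card Cols) else 0)"
  using assms unfolding is_complex_hadamard_def by auto

context
  fixes D :: "'d set" and C :: "'c set" and \<phi> :: "'c \<Rightarrow> 'd \<Rightarrow> complex" and a :: "'c \<Rightarrow> complex"
  assumes simplex: "unimodular_simplex D C \<phi> a"
begin

private lemma hadamard:
  "is_complex_hadamard (insert None (Some ` D)) C
     (\<lambda>r c. case r of None \<Rightarrow> a c | Some d \<Rightarrow> \<phi> c d)"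
  using simplex by (simp add: unimodular_simplex_def)

lemma unimodular_simplex_finite: "finite D"
proof -
  have "finite (Some ` D)" using is_complex_hadamardD(1)[OF hadamard] by simp
  then show ?thesis by (rule finite_imageD) simp
qed

lemma unimodular_simplex_norm_complement: "c \<in> C \<Longrightarrow> cmod (a c) = 1"
  using is_complex_hadamardD(3)[OF hadamard, of None c] by simp

lemma unimodular_simplex_norm_entry: "c \<in> C \<Longrightarrow> d \<in> D \<Longrightarrow> cmod (\<phi> c d) = 1"
  using is_complex_hadamardD(3)[OF hadamard, of "Some d" c] by simp

lemma unimodular_simplex_rows_orthogonal:
  "d1 \<in> D \<Longrightarrow> d2 \<in> D \<Longrightarrow>
   (\<Sum>c\<in>C. \<phi> c d1 * cnj (\<phi> c d2)) = (if d1 = d2 then of_nat (card C) else 0)"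
  using is_complex_hadamardD(4)[OF hadamard, of "Some d1" "Some d2"] by simp

lemma unimodular_simplex_complement_orthogonal: "d \<in> D \<Longrightarrow> (\<Sum>c\<in>C. a c * cnj (\<phi> c d)) = 0"
  using is_complex_hadamardD(4)[OF hadamard, of None "Some d"] by simp

lemma unimodular_simplex_columns_orthogonal:
  assumes "c1 \<in> C" "c2 \<in> C"
  shows "a c1 * cnj (a c2) + (\<Sum>d\<in>D. \<phi> c1 d * cnj (\<phi> c2 d)) = (if c1 = c2 then of_nat (card C) else 0)"
proof -
  have "(\<Sum>r\<in>insert None (Some ` D). (case r of None \<Rightarrow> a c1 | Some d \<Rightarrow> \<phi> c1 d) *
      cnj (case r of None \<Rightarrow> a c2 | Some d \<Rightarrow> \<phi> c2 d)) = (if c1 = c2 then of_nat (card C) else 0)"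
    using complex_hadamard_columns_orthogonal[OF hadamard assms]
    unfolding is_complex_hadamardD(2)[OF hadamard] .
  then show ?thesis
    using unimodular_simplex_finite by (subst (asm) sum.insert) (auto simp: sum.reindex)
qed

end

lemma steiner_triple_system_finite_blocks:
  assumes "steiner_triple_system Vs Bs"
  shows "finite Bs"
proof (rule finite_subset)
  show "Bs \<subseteq> Pow Vs" "finite (Pow Vs)"
    using assms by (auto simp: steiner_triple_system_def)
qed

lemma steiner_triple_system_card_points:
  assumes sts: "steiner_triple_system Vs Bs" and v: "v \<in> Vs"
  shows "card Vs = 2 * card {B\<in>Bs. v \<in> B} + 1"
proof -
  let ?Bv = "{B\<in>Bs. v \<in> B}"
  have fin: "finite Vs" "finite ?Bv"
    using sts steiner_triple_system_finite_blocks[OF sts] by (auto simp: steiner_triple_system_def)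
  have blocks: "\<And>B. B \<in> Bs \<Longrightarrow> B \<subseteq> Vs \<and> card B = 3"
    and unique: "\<And>w. w \<in> Vs \<Longrightarrow> w \<noteq> v \<Longrightarrow> \<exists>!B. B \<in> Bs \<and> {v, w} \<subseteq> B"
    using sts v by (auto simp: steiner_triple_system_def)
  have finite_block: "finite B" if "B \<in> Bs" for B
    using blocks[OF that] fin(1) finite_subset by blast
  \<comment> \<open>the blocks through \<open>v\<close> partition the remaining points into pairs\<close>
  have partition: "Vs - {v} = (\<Union>B\<in>?Bv. B - {v})"
  proof
    show "Vs - {v} \<subseteq> (\<Union>B\<in>?Bv. B - {v})"
    proof
      fix w assume w: "w \<in> Vs - {v}"
      then obtain B where "B \<in> Bs" "{v, w} \<subseteq> B" using unique[of w] by auto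
      with w show "w \<in> (\<Union>B\<in>?Bv. B - {v})" by auto
    qed
  qed (use blocks in auto)
  have disjoint: "(B1 - {v}) \<inter> (B2 - {v}) = {}" if "B1 \<in> ?Bv" "B2 \<in> ?Bv" "B1 \<noteq> B2" for B1 B2
  proof (rule ccontr)
    assume "(B1 - {v}) \<inter> (B2 - {v}) \<noteq> {}"
    then obtain w where "w \<in> B1" "w \<in> B2" "w \<noteq> v" by auto
    with that blocks unique[of w] show False by blast
  qed
  have "card (Vs - {v}) = (\<Sum>B\<in>?Bv. card (B - {v}))"
    unfolding partition
    by (rule card_UN_disjoint[OF fin(2)]) (use finite_block disjoint in auto)
  also have "\<dots> = (\<Sum>B\<in>?Bv. 2)"
    using blocks finite_block by (intro sum.cong) (auto simp: card_Diff_singleton)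
  finally have "card Vs - 1 = 2 * card ?Bv"
    using v fin(1) by (simp add: card_Diff_singleton)
  moreover have "card Vs > 0" using v fin(1) card_gt_0_iff by blast
  ultimately show ?thesis by linarith
qed

lemma embed_op_apply:
  assumes inj: "inj_on e {1..R}"
  shows "embed_op R e x B = (if B \<in> e ` {1..R} then x (the_inv_into {1..R} e B) else 0)"
proof (cases "B \<in> e ` {1..R}")
  case True
  then obtain r where B: "B = e r" and r: "r \<in> {1..R}" by (rule imageE)
  have "embed_op R e x B = (\<Sum>r'\<in>{1..R}. if r' = r then x r' else 0)"
    unfolding embed_op_def
  proof (rule sum.cong[OF refl])
    fix r' assume "r' \<in> {1..R}"
    then have "(e r' = B) = (r' = r)" unfolding B by (rule inj_on_eq_iff[OF inj _ r])
    then show "x r' * (if e r' = B then 1 else 0) = (if r' = r then x r' else 0)" by simp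
  qed
  also have "\<dots> = x r" using r by simp
  finally show ?thesis using True by (simp only: B the_inv_into_f_f[OF inj r] if_True)
next
  case False
  then have "e r \<noteq> B" if "r \<in> {1..R}" for r using that by blast
  then have "embed_op R e x B = 0" unfolding embed_op_def by (intro sum.neutral) simp
  then show ?thesis unfolding if_not_P[OF False] .
qed

lemma embed_op_isometric:
  assumes inj: "inj_on e {1..R}" and "e ` {1..R} \<subseteq> Bs" and "finite Bs"
  shows "(\<Sum>B\<in>Bs. embed_op R e x B * cnj (embed_op R e y B)) = (\<Sum>r\<in>{1..R}. x r * cnj (y r))"
proof -
  have outside: "embed_op R e z B = 0" if "B \<notin> e ` {1..R}" for z B
    unfolding embed_op_apply[OF inj] using that by (rule if_not_P)
  have at_image: "embed_op R e z (e r) = z r" if r: "r \<in> {1..R}" for z r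
  proof -
    have "e r \<in> e ` {1..R}" using r by (rule imageI)
    then show ?thesis unfolding embed_op_apply[OF inj] the_inv_into_f_f[OF inj r] by (rule if_P)
  qed
  have "(\<Sum>B\<in>Bs. embed_op R e x B * cnj (embed_op R e y B))
      = (\<Sum>B\<in>e ` {1..R}. embed_op R e x B * cnj (embed_op R e y B))"
    using assms(2,3) outside by (intro sum.mono_neutral_right) auto
  also have "\<dots> = (\<Sum>r\<in>{1..R}. embed_op R e x (e r) * cnj (embed_op R e y (e r)))"
    using inj by (simp add: sum.reindex)
  also have "\<dots> = (\<Sum>r\<in>{1..R}. x r * cnj (y r))"
    using at_image by simp
  finally show ?thesis .
qed

lemma cinner_commute: "cinner I y x = cnj (cinner I x y)"
  unfolding cinner_def cnj_sum by (simp add: mult.commute)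

lemma unimodular_mult_cnj:
  assumes "cmod z = 1"
  shows "z * cnj z = 1" and "cnj z * z = 1"
  using complex_norm_square[of z] assms by (simp_all add: mult.commute)

lemma of_real_sqrt_mult_self:
  "0 \<le> x \<Longrightarrow> complex_of_real (sqrt x) * complex_of_real (sqrt x) = complex_of_real x"
  by (simp flip: of_real_mult)

lemma tight_frame_of_orthogonal_rows:
  assumes "finite I"
    and rows: "\<And>k i. k \<in> I \<Longrightarrow> i \<in> I \<Longrightarrow>
      (\<Sum>j\<in>J. cnj (\<phi> j k) * \<phi> j i) = (if k = i then c else 0)"
    and i: "i \<in> I"
  shows "(\<Sum>j\<in>J. cinner I x (\<phi> j) * \<phi> j i) = c * x i"
proof -
  have "(\<Sum>j\<in>J. cinner I x (\<phi> j) * \<phi> j i) = (\<Sum>j\<in>J. \<Sum>k\<in>I. x k * (cnj (\<phi> j k) * \<phi> j i))"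
    unfolding cinner_def by (simp add: sum_distrib_right mult.assoc)
  also have "\<dots> = (\<Sum>k\<in>I. x k * (\<Sum>j\<in>J. cnj (\<phi> j k) * \<phi> j i))"
    by (subst sum.swap) (simp add: sum_distrib_left)
  also have "\<dots> = (\<Sum>k\<in>I. if k = i then x k * c else 0)"
    using rows[OF _ i] by (intro sum.cong) auto
  also have "\<dots> = c * x i" using i assms(1) by (simp add: mult.commute)
  finally show ?thesis .
qed

lemma is_ETFI:
  assumes "finite I" and "finite J"
    and nonzero: "\<And>j. j \<in> J \<Longrightarrow> \<exists>i\<in>I. \<phi> j i \<noteq> 0"
    and norms: "\<And>j. j \<in> J \<Longrightarrow> cinner I (\<phi> j) (\<phi> j) = \<nu>"
    and moduli: "\<And>j k. j \<in> J \<Longrightarrow> k \<in> J \<Longrightarrow> j \<noteq> k \<Longrightarrow> cmod (cinner I (\<phi> j) (\<phi> k)) = \<mu>"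
    and rows: "\<And>k i. k \<in> I \<Longrightarrow> i \<in> I \<Longrightarrow>
      (\<Sum>j\<in>J. cnj (\<phi> j k) * \<phi> j i) = (if k = i then c else 0)"
  shows "is_ETF I J \<phi>"
proof -
  have "\<forall>j\<in>J. \<exists>i\<in>I. \<phi> j i \<noteq> 0" using nonzero by blast
  moreover have "\<forall>j\<in>J. \<forall>k\<in>J. cinner I (\<phi> j) (\<phi> j) = cinner I (\<phi> k) (\<phi> k)"
    using norms by simp
  moreover have "\<forall>j1\<in>J. \<forall>j2\<in>J. \<forall>k1\<in>J. \<forall>k2\<in>J. j1 \<noteq> j2 \<longrightarrow> k1 \<noteq> k2 \<longrightarrow>
      cmod (cinner I (\<phi> j1) (\<phi> j2)) = cmod (cinner I (\<phi> k1) (\<phi> k2))"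
    using moduli by simp
  moreover have "\<forall>x. \<forall>i\<in>I. (\<Sum>j\<in>J. cinner I x (\<phi> j) * \<phi> j i) = c * x i"
    using tight_frame_of_orthogonal_rows[OF assms(1) rows] by blast
  ultimately show ?thesis unfolding is_ETF_def using assms(1,2) by blast
qed

locale steiner_simplex_frame =
  fixes Vs :: "'v set" and Bs :: "'v set set" and R :: nat
    and E :: "'v \<Rightarrow> nat \<Rightarrow> 'v set"
    and \<phi> :: "nat \<Rightarrow> nat \<Rightarrow> complex" and a :: "nat \<Rightarrow> complex"
    and \<psi> :: "nat \<Rightarrow> 'v \<Rightarrow> complex" and b :: "nat \<Rightarrow> complex"
  assumes sts: "steiner_triple_system Vs Bs"
    and replication: "\<forall>v\<in>Vs. card {B\<in>Bs. v \<in> B} = R"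
    and embedding: "\<forall>v\<in>Vs. bij_betw (E v) {1..R} {B\<in>Bs. v \<in> B}"
    and simplex_blocks: "unimodular_simplex {1..R} {1..R+1} \<phi> a"
    and simplex_points: "unimodular_simplex Vs {1..card Vs + 1} \<psi> b"
begin

lemma finite_points: "finite Vs"
  using sts by (simp add: steiner_triple_system_def)

lemma finite_blocks: "finite Bs"
  using sts by (rule steiner_triple_system_finite_blocks)

lemma block_subset: "B \<in> Bs \<Longrightarrow> B \<subseteq> Vs"
  using sts by (simp add: steiner_triple_system_def)

lemma block_card: "B \<in> Bs \<Longrightarrow> card B = 3"
  using sts by (simp add: steiner_triple_system_def)

lemma card_points: "v \<in> Vs \<Longrightarrow> card Vs = 2 * R + 1"
  using steiner_triple_system_card_points[OF sts] replication by simp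

lemma unique_block:
  assumes "v \<in> Vs" "w \<in> Vs" "v \<noteq> w"
  obtains B0 where "B0 \<in> Bs" "v \<in> B0" "w \<in> B0" "\<And>B. B \<in> Bs \<Longrightarrow> v \<in> B \<Longrightarrow> w \<in> B \<Longrightarrow> B = B0"
proof -
  have "\<exists>!B. B \<in> Bs \<and> {v, w} \<subseteq> B"
    using sts assms by (simp add: steiner_triple_system_def)
  then obtain B0 where "B0 \<in> Bs" "{v, w} \<subseteq> B0" and "\<And>B. B \<in> Bs \<Longrightarrow> {v, w} \<subseteq> B \<Longrightarrow> B = B0"
    by (elim ex1E) blast
  then show thesis using that by blast
qed

definition block_pos :: "'v \<Rightarrow> 'v set \<Rightarrow> nat" where
  "block_pos v B = the_inv_into {1..R} (E v) B"

lemma inj_embedding: "v \<in> Vs \<Longrightarrow> inj_on (E v) {1..R}"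
  using embedding by (blast dest: bij_betw_imp_inj_on)

lemma image_embedding: "v \<in> Vs \<Longrightarrow> E v ` {1..R} = {B\<in>Bs. v \<in> B}"
  using embedding by (blast dest: bij_betw_imp_surj_on)

lemma block_pos:
  assumes v: "v \<in> Vs" and "B \<in> Bs" "v \<in> B"
  shows "block_pos v B \<in> {1..R}" and "E v (block_pos v B) = B"
proof -
  have B: "B \<in> E v ` {1..R}" unfolding image_embedding[OF v] using assms by simp
  show "block_pos v B \<in> {1..R}"
    unfolding block_pos_def by (rule the_inv_into_into[OF inj_embedding[OF v] B subset_refl])
  show "E v (block_pos v B) = B"
    unfolding block_pos_def by (rule f_the_inv_into_f[OF inj_embedding[OF v] B])
qed

lemma embed_op_block:
  assumes v: "v \<in> Vs" and "B \<in> Bs"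
  shows "embed_op R (E v) x B = (if v \<in> B then x (block_pos v B) else 0)"
proof -
  have "(B \<in> E v ` {1..R}) = (v \<in> B)" unfolding image_embedding[OF v] using assms by simp
  then show ?thesis unfolding embed_op_apply[OF inj_embedding[OF v]] block_pos_def by (rule arg_cong)
qed

definition coords :: "('v set + ('v + unit)) set" where
  "coords = Inl ` Bs \<union> Inr ` Inl ` Vs \<union> {Inr (Inr ())}"

definition frame_idx :: "((nat \<times> 'v) + nat) set" where
  "frame_idx = Inl ` ({1..R+1} \<times> Vs) \<union> Inr ` {1..card Vs + 1}"

definition frame_vec :: "((nat \<times> 'v) + nat) \<Rightarrow> ('v set + ('v + unit)) \<Rightarrow> complex" where
  "frame_vec = (\<lambda>j i. case j of
        Inl (s, v) \<Rightarrow> (case i of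
            Inl B \<Rightarrow> embed_op R (E v) (\<phi> s) B
          | Inr (Inl w) \<Rightarrow> complex_of_real (sqrt 2) * a s * (if w = v then 1 else 0)
          | Inr (Inr _) \<Rightarrow> 0)
      | Inr t \<Rightarrow> (case i of
            Inl B \<Rightarrow> 0
          | Inr (Inl w) \<Rightarrow> complex_of_real (sqrt (1/2)) * \<psi> t w
          | Inr (Inr _) \<Rightarrow> complex_of_real (sqrt (3/2)) * b t))"

lemma frame_vec_simps [simp]:
  "frame_vec (Inl (s,v)) (Inl B) = embed_op R (E v) (\<phi> s) B"
  "frame_vec (Inl (s,v)) (Inr (Inl w)) = (if w = v then complex_of_real (sqrt 2) * a s else 0)"
  "frame_vec (Inl (s,v)) (Inr (Inr u)) = 0"
  "frame_vec (Inr t) (Inl B) = 0"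
  "frame_vec (Inr t) (Inr (Inl w)) = complex_of_real (sqrt (1/2)) * \<psi> t w"
  "frame_vec (Inr t) (Inr (Inr u)) = complex_of_real (sqrt (3/2)) * b t"
  by (simp_all add: frame_vec_def)

lemma finite_coords: "finite coords"
  unfolding coords_def using finite_blocks finite_points by simp

lemma finite_frame_idx: "finite frame_idx"
  unfolding frame_idx_def using finite_points by simp

lemma sum_coords:
  "(\<Sum>i\<in>coords. f i) = (\<Sum>B\<in>Bs. f (Inl B)) + (\<Sum>w\<in>Vs. f (Inr (Inl w))) + f (Inr (Inr ()))"
proof -
  have "coords = insert (Inr (Inr ())) (Inl ` Bs \<union> Inr ` Inl ` Vs)" unfolding coords_def by auto
  then have "(\<Sum>i\<in>coords. f i) = f (Inr (Inr ())) + (\<Sum>i\<in>Inl ` Bs \<union> Inr ` Inl ` Vs. f i)"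
    by (simp only:) (subst sum.insert, auto simp: finite_blocks finite_points)
  also have "(\<Sum>i\<in>Inl ` Bs \<union> Inr ` Inl ` Vs. f i) = (\<Sum>i\<in>Inl ` Bs. f i) + (\<Sum>i\<in>Inr ` Inl ` Vs. f i)"
    by (rule sum.union_disjoint) (auto simp: finite_blocks finite_points)
  also have "(\<Sum>i\<in>Inl ` Bs. f i) = (\<Sum>B\<in>Bs. f (Inl B))" by (simp add: sum.reindex)
  also have "(\<Sum>i\<in>Inr ` Inl ` Vs. f i) = (\<Sum>w\<in>Vs. f (Inr (Inl w)))"
    by (simp add: sum.reindex inj_on_def image_image)
  finally show ?thesis by (simp add: algebra_simps)
qed

lemma sum_frame_idx:
  "(\<Sum>j\<in>frame_idx. f j) = (\<Sum>s\<in>{1..R+1}. \<Sum>v\<in>Vs. f (Inl (s, v))) + (\<Sum>t\<in>{1..card Vs + 1}. f (Inr t))"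
proof -
  have "(\<Sum>j\<in>frame_idx. f j) = (\<Sum>j\<in>Inl ` ({1..R+1} \<times> Vs). f j) + (\<Sum>j\<in>Inr ` {1..card Vs + 1}. f j)"
    unfolding frame_idx_def by (rule sum.union_disjoint) (auto simp: finite_points)
  also have "(\<Sum>j\<in>Inl ` ({1..R+1} \<times> Vs). f j) = (\<Sum>s\<in>{1..R+1}. \<Sum>v\<in>Vs. f (Inl (s, v)))"
    by (simp add: sum.reindex sum.cartesian_product')
  also have "(\<Sum>j\<in>Inr ` {1..card Vs + 1}. f j) = (\<Sum>t\<in>{1..card Vs + 1}. f (Inr t))"
    by (simp add: sum.reindex)
  finally show ?thesis .
qed

lemma cinner_coords: "cinner coords x y = (\<Sum>B\<in>Bs. x (Inl B) * cnj (y (Inl B)))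
   + (\<Sum>w\<in>Vs. x (Inr (Inl w)) * cnj (y (Inr (Inl w)))) + x (Inr (Inr ())) * cnj (y (Inr (Inr ())))"
  unfolding cinner_def by (rule sum_coords)

definition row_inner :: "('v set + ('v + unit)) \<Rightarrow> ('v set + ('v + unit)) \<Rightarrow> complex" where
  "row_inner k i = (\<Sum>j\<in>frame_idx. cnj (frame_vec j k) * frame_vec j i)"

lemma row_inner_commute: "row_inner i k = cnj (row_inner k i)"
  unfolding row_inner_def cnj_sum by (simp add: mult.commute)

lemma embed_rows_orthogonal:
  assumes v: "v \<in> Vs" and B1: "B1 \<in> Bs" and B2: "B2 \<in> Bs"
  shows "(\<Sum>s\<in>{1..R+1}. cnj (embed_op R (E v) (\<phi> s) B1) * embed_op R (E v) (\<phi> s) B2)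
      = (if v \<in> B1 \<and> B1 = B2 then of_nat (R+1) else 0)"
proof (cases "v \<in> B1 \<and> v \<in> B2")
  case True
  have pos1: "block_pos v B1 \<in> {1..R}" "E v (block_pos v B1) = B1" using block_pos[OF v B1] True by auto
  have pos2: "block_pos v B2 \<in> {1..R}" "E v (block_pos v B2) = B2" using block_pos[OF v B2] True by auto
  have "(\<Sum>s\<in>{1..R+1}. cnj (embed_op R (E v) (\<phi> s) B1) * embed_op R (E v) (\<phi> s) B2)
      = (\<Sum>s\<in>{1..R+1}. \<phi> s (block_pos v B2) * cnj (\<phi> s (block_pos v B1)))"
    using True by (simp add: embed_op_block[OF v B1] embed_op_block[OF v B2] mult.commute)
  also have "\<dots> = (if block_pos v B2 = block_pos v B1 then of_nat (R+1) else 0)"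
    using unimodular_simplex_rows_orthogonal[OF simplex_blocks pos2(1) pos1(1)] by simp
  finally show ?thesis using pos1 pos2 True by metis
next
  case False
  then show ?thesis by (auto simp: embed_op_block[OF v B1] embed_op_block[OF v B2])
qed

lemma row_inner_blocks:
  assumes B1: "B1 \<in> Bs" and B2: "B2 \<in> Bs"
  shows "row_inner (Inl B1) (Inl B2) = (if B1 = B2 then of_nat (3 * (R + 1)) else 0)"
proof -
  have "row_inner (Inl B1) (Inl B2)
      = (\<Sum>s\<in>{1..R+1}. \<Sum>v\<in>Vs. cnj (embed_op R (E v) (\<phi> s) B1) * embed_op R (E v) (\<phi> s) B2)"
    unfolding row_inner_def by (simp add: sum_frame_idx)
  also have "\<dots> = (\<Sum>v\<in>Vs. \<Sum>s\<in>{1..R+1}. cnj (embed_op R (E v) (\<phi> s) B1) * embed_op R (E v) (\<phi> s) B2)"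
    by (rule sum.swap)
  also have "\<dots> = (\<Sum>v\<in>Vs. if v \<in> B1 \<and> B1 = B2 then of_nat (R+1) else 0)"
    using embed_rows_orthogonal[OF _ B1 B2] by simp
  also have "\<dots> = (if B1 = B2 then of_nat (3*(R+1)) else 0)"
  proof (cases "B1 = B2")
    case True
    have "(\<Sum>v\<in>Vs. if v \<in> B1 \<and> B1 = B2 then (of_nat (R+1)::complex) else 0)
        = (\<Sum>v\<in>{v\<in>Vs. v \<in> B1}. of_nat (R+1))"
      using True finite_points sum.inter_filter[of Vs "\<lambda>_. of_nat (R+1)::complex" "\<lambda>v. v \<in> B1"] by simp
    also have "{v\<in>Vs. v \<in> B1} = B1" using block_subset[OF B1] by auto
    finally show ?thesis using True block_card[OF B1] by simp
  qed simp
  finally show ?thesis .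
qed

lemma row_inner_block_point:
  assumes B: "B \<in> Bs" and w: "w \<in> Vs"
  shows "row_inner (Inl B) (Inr (Inl w)) = 0" and "row_inner (Inr (Inl w)) (Inl B) = 0"
proof -
  have "row_inner (Inl B) (Inr (Inl w))
      = (\<Sum>s\<in>{1..R+1}. \<Sum>v\<in>Vs. cnj (embed_op R (E v) (\<phi> s) B) * (if w = v then complex_of_real (sqrt 2) * a s else 0))"
    unfolding row_inner_def by (simp add: sum_frame_idx)
  also have "\<dots> = (\<Sum>s\<in>{1..R+1}. cnj (embed_op R (E w) (\<phi> s) B) * (complex_of_real (sqrt 2) * a s))"
    using w finite_points by (simp add: if_distrib[of "\<lambda>x. _ * x"] cong: if_cong)
  also have "\<dots> = 0"
  proof (cases "w \<in> B")
    case True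
    have "(\<Sum>s\<in>{1..R+1}. cnj (embed_op R (E w) (\<phi> s) B) * (complex_of_real (sqrt 2) * a s))
       = complex_of_real (sqrt 2) * (\<Sum>s\<in>{1..R+1}. a s * cnj (\<phi> s (block_pos w B)))"
      using True by (simp add: embed_op_block[OF w B] sum_distrib_left algebra_simps)
    then show ?thesis
      using unimodular_simplex_complement_orthogonal[OF simplex_blocks block_pos(1)[OF w B True]] by simp
  next
    case False
    then show ?thesis by (simp add: embed_op_block[OF w B])
  qed
  finally show "row_inner (Inl B) (Inr (Inl w)) = 0" .
  then show "row_inner (Inr (Inl w)) (Inl B) = 0" by (subst row_inner_commute) simp
qed

lemma row_inner_points:
  assumes w1: "w1 \<in> Vs" and w2: "w2 \<in> Vs"
  shows "row_inner (Inr (Inl w1)) (Inr (Inl w2))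
     = (if w1 = w2 then of_nat (2*(R+1)) + (of_nat (card Vs) + 1) / 2 else 0)"
proof -
  have lifted: "(\<Sum>v\<in>Vs. cnj (if w1 = v then complex_of_real (sqrt 2) * a s else 0)
      * (if w2 = v then complex_of_real (sqrt 2) * a s else 0)) = (if w1 = w2 then 2 else 0)"
    if s: "s \<in> {1..R+1}" for s
  proof -
    have "(\<Sum>v\<in>Vs. cnj (if w1 = v then complex_of_real (sqrt 2) * a s else 0)
        * (if w2 = v then complex_of_real (sqrt 2) * a s else 0))
       = (\<Sum>v\<in>Vs. if v = w1 then (if w1 = w2 then 2 else 0) else 0)"
      using unimodular_mult_cnj(2)[OF unimodular_simplex_norm_complement[OF simplex_blocks s]]
        of_real_sqrt_mult_self[of 2]
      by (intro sum.cong) (auto simp: algebra_simps)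
    also have "\<dots> = (if w1 = w2 then 2 else 0)" using w1 finite_points by simp
    finally show ?thesis .
  qed
  have "row_inner (Inr (Inl w1)) (Inr (Inl w2))
     = (\<Sum>s\<in>{1..R+1}. if w1 = w2 then 2 else 0)
       + 1/2 * (\<Sum>t\<in>{1..card Vs + 1}. \<psi> t w2 * cnj (\<psi> t w1))"
    unfolding row_inner_def sum_frame_idx using lifted
    by (simp add: sum_distrib_left algebra_simps flip: of_real_mult)
  also have "\<dots> = (if w1 = w2 then of_nat (2*(R+1)) + (of_nat (card Vs) + 1) / 2 else 0)"
    using unimodular_simplex_rows_orthogonal[OF simplex_points w2 w1] by auto
  finally show ?thesis .
qed

lemma row_inner_point_extra:
  assumes w: "w \<in> Vs"
  shows "row_inner (Inr (Inl w)) (Inr (Inr ())) = 0" and "row_inner (Inr (Inr ())) (Inr (Inl w)) = 0"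
proof -
  have "row_inner (Inr (Inl w)) (Inr (Inr ()))
     = complex_of_real (sqrt (1/2)) * complex_of_real (sqrt (3/2)) * (\<Sum>t\<in>{1..card Vs + 1}. b t * cnj (\<psi> t w))"
    unfolding row_inner_def by (simp add: sum_frame_idx sum_distrib_left algebra_simps)
  then show "row_inner (Inr (Inl w)) (Inr (Inr ())) = 0"
    using unimodular_simplex_complement_orthogonal[OF simplex_points w] by simp
  then show "row_inner (Inr (Inr ())) (Inr (Inl w)) = 0" by (subst row_inner_commute) simp
qed

lemma row_inner_block_extra:
  shows "row_inner (Inl B) (Inr (Inr ())) = 0" and "row_inner (Inr (Inr ())) (Inl B) = 0"
  unfolding row_inner_def by (simp_all add: sum_frame_idx)

lemma row_inner_extra: "row_inner (Inr (Inr ())) (Inr (Inr ())) = 3 / 2 * (of_nat (card Vs) + 1)"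
proof -
  have "row_inner (Inr (Inr ())) (Inr (Inr ()))
     = (\<Sum>t\<in>{1..card Vs + 1}. (complex_of_real (sqrt (3/2)) * complex_of_real (sqrt (3/2))) * (cnj (b t) * b t))"
    unfolding row_inner_def by (simp add: sum_frame_idx algebra_simps)
  also have "\<dots> = (\<Sum>t\<in>{1..card Vs + 1}. 3/2)"
    using unimodular_mult_cnj(2)[OF unimodular_simplex_norm_complement[OF simplex_points]]
      of_real_sqrt_mult_self[of "3/2"]
    by (intro sum.cong) simp_all
  finally show ?thesis by simp
qed

lemma rows_orthogonal:
  assumes k: "k \<in> coords" and i: "i \<in> coords"
  shows "row_inner k i = (if k = i then 3 / 2 * (of_nat (card Vs) + 1) else 0)"
proof (cases "Vs = {}")
  case True
  then have "Bs = {}" using block_subset block_card by fastforce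
  then have "k = Inr (Inr ())" "i = Inr (Inr ())" using k i True unfolding coords_def by auto
  then show ?thesis using row_inner_extra by simp
next
  case False
  then obtain v where v: "v \<in> Vs" by auto
  have "of_nat (3 * (R + 1)) = 3 / 2 * (of_nat (card Vs) + (1::complex))"
    and "of_nat (2 * (R + 1)) + (of_nat (card Vs) + 1) / 2 = 3 / 2 * (of_nat (card Vs) + (1::complex))"
    using card_points[OF v] by (simp_all add: field_simps)
  moreover have "(\<exists>B\<in>Bs. k = Inl B) \<or> (\<exists>w\<in>Vs. k = Inr (Inl w)) \<or> k = Inr (Inr ())"
    and "(\<exists>B\<in>Bs. i = Inl B) \<or> (\<exists>w\<in>Vs. i = Inr (Inl w)) \<or> i = Inr (Inr ())"
    using k i unfolding coords_def by auto
  ultimately show ?thesis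
    by (elim disjE bexE)
       (simp_all only: row_inner_blocks row_inner_block_point row_inner_points row_inner_point_extra
          row_inner_block_extra row_inner_extra sum.inject old.sum.inject sum.distinct
          if_True if_False simp_thms)
qed

lemma cinner_Inl_Inl:
  assumes "v \<in> Vs" "v' \<in> Vs"
  shows "cinner coords (frame_vec (Inl (s,v))) (frame_vec (Inl (s',v')))
     = (\<Sum>B\<in>Bs. embed_op R (E v) (\<phi> s) B * cnj (embed_op R (E v') (\<phi> s') B))
       + (if v = v' then 2 * (a s * cnj (a s')) else 0)"
proof -
  have "(\<Sum>w\<in>Vs. (if w = v then complex_of_real (sqrt 2) * a s else 0)
      * cnj (if w = v' then complex_of_real (sqrt 2) * a s' else 0))
    = (\<Sum>w\<in>Vs. if w = v then (if v = v' then 2 * (a s * cnj (a s')) else 0) else 0)"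
    using of_real_sqrt_mult_self[of 2] by (intro sum.cong) (auto simp: algebra_simps)
  also have "\<dots> = (if v = v' then 2 * (a s * cnj (a s')) else 0)"
    using assms(1) finite_points by simp
  finally show ?thesis unfolding cinner_coords by simp
qed

lemma embed_inner_same_point:
  assumes v: "v \<in> Vs"
  shows "(\<Sum>B\<in>Bs. embed_op R (E v) x B * cnj (embed_op R (E v) y B)) = (\<Sum>r\<in>{1..R}. x r * cnj (y r))"
  by (rule embed_op_isometric[OF inj_embedding[OF v] _ finite_blocks]) (unfold image_embedding[OF v], blast)

text \<open>Distinct points share exactly one block, so their embedded vectors overlap in one coordinate.\<close>
lemma embed_inner_distinct_points:
  assumes v: "v \<in> Vs" "w \<in> Vs" "v \<noteq> w"
  obtains B0 where "B0 \<in> Bs" "v \<in> B0" "w \<in> B0"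
    "(\<Sum>B\<in>Bs. embed_op R (E v) x B * cnj (embed_op R (E w) y B))
       = x (block_pos v B0) * cnj (y (block_pos w B0))"
proof -
  obtain B0 where B0: "B0 \<in> Bs" "v \<in> B0" "w \<in> B0"
    and unique: "\<And>B. B \<in> Bs \<Longrightarrow> v \<in> B \<Longrightarrow> w \<in> B \<Longrightarrow> B = B0"
    using unique_block[OF v] by blast
  have "(\<Sum>B\<in>Bs. embed_op R (E v) x B * cnj (embed_op R (E w) y B))
      = (\<Sum>B\<in>Bs. if B = B0 then x (block_pos v B) * cnj (y (block_pos w B)) else 0)"
  proof (rule sum.cong[OF refl])
    fix B assume B: "B \<in> Bs"
    then have "(v \<in> B \<and> w \<in> B) = (B = B0)" using B0 unique by blast
    then show "embed_op R (E v) x B * cnj (embed_op R (E w) y B)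
        = (if B = B0 then x (block_pos v B) * cnj (y (block_pos w B)) else 0)"
      by (auto simp: embed_op_block[OF v(1) B] embed_op_block[OF v(2) B])
  qed
  also have "\<dots> = x (block_pos v B0) * cnj (y (block_pos w B0))"
    using B0(1) finite_blocks by simp
  finally show thesis using that B0 by blast
qed

lemma cinner_Inl_Inr:
  assumes v: "v \<in> Vs"
  shows "cinner coords (frame_vec (Inl (s,v))) (frame_vec (Inr t)) = a s * cnj (\<psi> t v)"
proof -
  have "(\<Sum>w\<in>Vs. (if w = v then complex_of_real (sqrt 2) * a s else 0) * cnj (complex_of_real (sqrt (1/2)) * \<psi> t w))
     = (\<Sum>w\<in>Vs. if w = v then (complex_of_real (sqrt 2) * complex_of_real (sqrt (1/2))) * (a s * cnj (\<psi> t v)) else 0)"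
    by (intro sum.cong) (auto simp: algebra_simps)
  also have "\<dots> = a s * cnj (\<psi> t v)"
    using v finite_points by (simp flip: of_real_mult real_sqrt_mult)
  finally show ?thesis unfolding cinner_coords by simp
qed

lemma cinner_Inr_Inr:
  "cinner coords (frame_vec (Inr t)) (frame_vec (Inr t'))
   = 1/2 * (\<Sum>w\<in>Vs. \<psi> t w * cnj (\<psi> t' w)) + 3/2 * (b t * cnj (b t'))"
proof -
  have half: "complex_of_real (sqrt (1/2)) * complex_of_real (sqrt (1/2)) = 1/2"
    and three_halves: "complex_of_real (sqrt (3/2)) * complex_of_real (sqrt (3/2)) = 3/2"
    using of_real_sqrt_mult_self[of "1/2"] of_real_sqrt_mult_self[of "3/2"] by simp_all
  have points: "(\<Sum>w\<in>Vs. complex_of_real (sqrt (1/2)) * \<psi> t w * cnj (complex_of_real (sqrt (1/2)) * \<psi> t' w))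
      = 1/2 * (\<Sum>w\<in>Vs. \<psi> t w * cnj (\<psi> t' w))"
    unfolding half[symmetric] by (simp add: sum_distrib_left algebra_simps)
  have extra: "complex_of_real (sqrt (3/2)) * b t * cnj (complex_of_real (sqrt (3/2)) * b t')
      = 3/2 * (b t * cnj (b t'))"
    unfolding three_halves[symmetric] by (simp add: algebra_simps)
  show ?thesis unfolding cinner_coords frame_vec_simps points extra by simp
qed

lemma frame_vec_norm:
  assumes "j \<in> frame_idx"
  shows "cinner coords (frame_vec j) (frame_vec j) = (of_nat (card Vs) + 3) / 2"
proof (cases j)
  case (Inl p)
  then obtain s v where j: "j = Inl (s,v)" and s: "s \<in> {1..R+1}" and v: "v \<in> Vs"
    using assms unfolding frame_idx_def by auto
  have "(\<Sum>r\<in>{1..R}. \<phi> s r * cnj (\<phi> s r)) = (\<Sum>r\<in>{1..R}. 1)"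
    by (intro sum.cong refl unimodular_mult_cnj(1) unimodular_simplex_norm_entry[OF simplex_blocks s]) simp
  then have "cinner coords (frame_vec j) (frame_vec j) = of_nat R + 2"
    unfolding j cinner_Inl_Inl[OF v v] embed_inner_same_point[OF v]
    using unimodular_mult_cnj(1)[OF unimodular_simplex_norm_complement[OF simplex_blocks s]] by simp
  then show ?thesis using card_points[OF v] by (simp add: field_simps)
next
  case (Inr t)
  then have t: "t \<in> {1..card Vs + 1}" using assms unfolding frame_idx_def by auto
  have "(\<Sum>w\<in>Vs. \<psi> t w * cnj (\<psi> t w)) = (\<Sum>w\<in>Vs. 1)"
    by (intro sum.cong refl unimodular_mult_cnj(1) unimodular_simplex_norm_entry[OF simplex_points t]) simp
  then show ?thesis
    unfolding Inr cinner_Inr_Inr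
    using unimodular_mult_cnj(1)[OF unimodular_simplex_norm_complement[OF simplex_points t]]
    by (simp add: field_simps)
qed

lemma cinner_Inl_Inl_same_point:
  assumes s: "s \<in> {1..R+1}" "s' \<in> {1..R+1}" "s \<noteq> s'" and v: "v \<in> Vs"
  shows "cinner coords (frame_vec (Inl (s,v))) (frame_vec (Inl (s',v))) = a s * cnj (a s')"
proof -
  have "a s * cnj (a s') + (\<Sum>r\<in>{1..R}. \<phi> s r * cnj (\<phi> s' r)) = 0"
    using unimodular_simplex_columns_orthogonal[OF simplex_blocks s(1,2)] s(3) by simp
  then show ?thesis
    unfolding cinner_Inl_Inl[OF v v] embed_inner_same_point[OF v]
    by (simp add: algebra_simps eq_neg_iff_add_eq_0)
qed

lemma cinner_Inl_Inl_distinct_points: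
  assumes s: "s \<in> {1..R+1}" "s' \<in> {1..R+1}" and v: "v \<in> Vs" "v' \<in> Vs" "v \<noteq> v'"
  shows "cmod (cinner coords (frame_vec (Inl (s,v))) (frame_vec (Inl (s',v')))) = 1"
proof -
  obtain B0 where "B0 \<in> Bs" "v \<in> B0" "v' \<in> B0" and overlap:
    "(\<Sum>B\<in>Bs. embed_op R (E v) (\<phi> s) B * cnj (embed_op R (E v') (\<phi> s') B))
       = \<phi> s (block_pos v B0) * cnj (\<phi> s' (block_pos v' B0))"
    using embed_inner_distinct_points[OF v] by metis
  then have "block_pos v B0 \<in> {1..R}" "block_pos v' B0 \<in> {1..R}"
    using block_pos(1) v by blast+
  then show ?thesis
    unfolding cinner_Inl_Inl[OF v(1,2)] overlap
    using v(3) unimodular_simplex_norm_entry[OF simplex_blocks] s by (simp add: norm_mult)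
qed

lemma cinner_Inr_Inr_distinct:
  assumes t: "t \<in> {1..card Vs + 1}" "t' \<in> {1..card Vs + 1}" "t \<noteq> t'"
  shows "cinner coords (frame_vec (Inr t)) (frame_vec (Inr t')) = b t * cnj (b t')"
proof -
  have "b t * cnj (b t') + (\<Sum>w\<in>Vs. \<psi> t w * cnj (\<psi> t' w)) = 0"
    using unimodular_simplex_columns_orthogonal[OF simplex_points t(1,2)] t(3) by simp
  then show ?thesis
    unfolding cinner_Inr_Inr by (simp add: eq_neg_iff_add_eq_0[symmetric] field_simps)
qed

lemma frame_vec_cinner_distinct:
  assumes j: "j \<in> frame_idx" and k: "k \<in> frame_idx" and "j \<noteq> k"
  shows "cmod (cinner coords (frame_vec j) (frame_vec k)) = 1"
proof -
  have unimodular_Inl_Inr: "cmod (cinner coords (frame_vec (Inl (s,v))) (frame_vec (Inr t))) = 1"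
    if "s \<in> {1..R+1}" "v \<in> Vs" "t \<in> {1..card Vs + 1}" for s v t
    using that cinner_Inl_Inr unimodular_simplex_norm_complement[OF simplex_blocks]
      unimodular_simplex_norm_entry[OF simplex_points] by (simp add: norm_mult)
  consider
      (lifted) s v s' v' where "j = Inl (s,v)" "k = Inl (s',v')" "s \<in> {1..R+1}" "s' \<in> {1..R+1}" "v \<in> Vs" "v' \<in> Vs"
    | (lifted_extra) s v t where "j = Inl (s,v)" "k = Inr t" "s \<in> {1..R+1}" "v \<in> Vs" "t \<in> {1..card Vs + 1}"
    | (extra_lifted) s v t where "j = Inr t" "k = Inl (s,v)" "s \<in> {1..R+1}" "v \<in> Vs" "t \<in> {1..card Vs + 1}"
    | (extra) t t' where "j = Inr t" "k = Inr t'" "t \<in> {1..card Vs + 1}" "t' \<in> {1..card Vs + 1}"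
    using j k unfolding frame_idx_def by auto
  then show ?thesis
  proof cases
    case lifted
    show ?thesis
    proof (cases "v = v'")
      case True
      with lifted \<open>j \<noteq> k\<close> have "s \<noteq> s'" by auto
      then show ?thesis
        using cinner_Inl_Inl_same_point[OF lifted(3,4) _ lifted(5)] lifted True
          unimodular_simplex_norm_complement[OF simplex_blocks] by (simp add: norm_mult)
    next
      case False
      then show ?thesis using cinner_Inl_Inl_distinct_points[OF lifted(3-6)] lifted by simp
    qed
  next
    case lifted_extra
    then show ?thesis using unimodular_Inl_Inr by simp
  next
    case extra_lifted
    then show ?thesis using unimodular_Inl_Inr cinner_commute[of coords "frame_vec j" "frame_vec k"] by simp
  next
    case extra
    with \<open>j \<noteq> k\<close> have "t \<noteq> t'" by auto
    then show ?thesis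
      using cinner_Inr_Inr_distinct[OF extra(3,4)] extra unimodular_simplex_norm_complement[OF simplex_points]
      by (simp add: norm_mult)
  qed
qed

lemma frame_vec_nonzero:
  assumes "j \<in> frame_idx"
  shows "\<exists>i\<in>coords. frame_vec j i \<noteq> 0"
proof (cases j)
  case (Inl p)
  then obtain s v where j: "j = Inl (s,v)" and s: "s \<in> {1..R+1}" and v: "v \<in> Vs"
    using assms unfolding frame_idx_def by auto
  have "frame_vec j (Inr (Inl v)) \<noteq> 0"
    using j unimodular_simplex_norm_complement[OF simplex_blocks s] by auto
  moreover have "Inr (Inl v) \<in> coords" using v unfolding coords_def by auto
  ultimately show ?thesis by blast
next
  case (Inr t)
  then have t: "t \<in> {1..card Vs + 1}" using assms unfolding frame_idx_def by auto
  have "frame_vec j (Inr (Inr ())) \<noteq> 0"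
    using Inr unimodular_simplex_norm_complement[OF simplex_points t] by auto
  moreover have "Inr (Inr ()) \<in> coords" unfolding coords_def by auto
  ultimately show ?thesis by blast
qed

lemma is_ETF_frame: "is_ETF coords frame_idx frame_vec"
  by (rule is_ETFI[OF finite_coords finite_frame_idx frame_vec_nonzero frame_vec_norm
        frame_vec_cinner_distinct rows_orthogonal[unfolded row_inner_def]])

end

theorem theorem3p1:
  fixes Vs :: "'v set" and Bs :: "'v set set" and R :: nat
    and E :: "'v \<Rightarrow> nat \<Rightarrow> 'v set"
    and \<phi> :: "nat \<Rightarrow> nat \<Rightarrow> complex" and a :: "nat \<Rightarrow> complex"
    and \<psi> :: "nat \<Rightarrow> 'v \<Rightarrow> complex" and b :: "nat \<Rightarrow> complex"
  assumes sts: "steiner_triple_system Vs Bs"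
    and rep: "\<forall>v\<in>Vs. card {B\<in>Bs. v \<in> B} = R"
    and emb: "\<forall>v\<in>Vs. bij_betw (E v) {1..R} {B\<in>Bs. v \<in> B}"
    and simp1: "unimodular_simplex {1..R} {1..R+1} \<phi> a"
    and simp2: "unimodular_simplex Vs {1..card Vs + 1} \<psi> b"
  shows "is_ETF
     (Inl ` Bs \<union> Inr ` Inl ` Vs \<union> {Inr (Inr ())})
     (Inl ` ({1..R+1} \<times> Vs) \<union> Inr ` {1..card Vs + 1})
     (\<lambda>j i. case j of
        Inl (s, v) \<Rightarrow> (case i of
            Inl B \<Rightarrow> embed_op R (E v) (\<phi> s) B
          | Inr (Inl w) \<Rightarrow> complex_of_real (sqrt 2) * a s * (if w = v then 1 else 0)
          | Inr (Inr _) \<Rightarrow> 0)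
      | Inr t \<Rightarrow> (case i of
            Inl B \<Rightarrow> 0
          | Inr (Inl w) \<Rightarrow> complex_of_real (sqrt (1/2)) * \<psi> t w
          | Inr (Inr _) \<Rightarrow> complex_of_real (sqrt (3/2)) * b t))"
proof -
  interpret steiner_simplex_frame Vs Bs R E \<phi> a \<psi> b
    using assms by unfold_locales
  show ?thesis using is_ETF_frame unfolding coords_def frame_idx_def frame_vec_def .
qed

end
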